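(* Let $A\in\mathbb R^{n\times n}$ with $A\neq0$, $b\in\mathbb R^n$, $U\subseteq\mathbb R^n$ compact and convex, $X_0\subseteq\mathbb R^n$ compact and convex, and $\tau\ge0$. Consider $\dot x(t)=Ax(t)+b+u(t)$ with measurable inputs $u(t)\in U$, and let $$\mathcal R^L_{X_0}(t)=\{x(t): x \text{ solves } \dot x=Ax+b+u \text{ on }[0,t],\ u(s)\in U\ \forall s,\ x(0)\in X_0\},\qquad \mathcal R^L_{X_0}([0,\tau])=\bigcup_{t\in[0,\tau]}\mathcal R^L_{X_0}(t).$$ Define $$\alpha_\tau=(e^{\tau\|A\|}-1-\tau\|A\|)\max_{x\in X_0}\|x\|\,\mathbf 1,\quad \beta_\tau=(e^{\tau\|A\|}-1-\tau\|A\|)\|A\|^{-1}\max_{u\in U}\|u\|\,\mathbf 1,\quad \gamma_\tau=(e^{\tau\|A\|}-1-\tau\|A\|)\|A\|^{-1}\|b\|\,\mathbf 1,$$ $G(A,\tau)=\int_0^\tau e^{A(\tau-t)}\,dt$, and $$Y(\tau)=e^{A\tau}X_0\oplus\{G(A,\tau)b\}\oplus\tau U\oplus\mathcal B_{\beta_\tau},\qquad Y([0,\tau])=\mathrm{CH}\big(X_0,\;Y(\tau)\oplus\mathcal B_{\alpha_\tau+\gamma_\tau}\big).$$ Then $\mathcal R^L_{X_0}(\tau)\subseteq Y(\tau)$ and $\mathcal R^L_{X_0}([0,\tau])\subseteq Y([0,\tau])$.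
   Context: $\|\cdot\|$ denotes the infinity norm on $\mathbb R^n$ and the induced matrix norm; $\mathbf 1\in\mathbb R^n$ is the all-ones vector. For $\delta\in\mathbb R^n_{\ge0}$, $\mathcal B_\delta=\{x\in\mathbb R^n: |x_i|\le\delta_i\ \forall i\}$. $\oplus$ is Minkowski sum, $\tau U=\{\tau u:u\in U\}$, $e^{A\tau}X_0=\{e^{A\tau}x:x\in X_0\}$. For convex sets $\mathcal X,\mathcal Y$, $\mathrm{CH}(\mathcal X,\mathcal Y)=\{\lambda x+(1-\lambda)y: x\in\mathcal X,y\in\mathcal Y,\lambda\in[0,1]\}$. *)

theory Defs
  imports "HOL-Analysis.Analysis"
begin

primrec mat_pow :: "real^'n^'n \<Rightarrow> nat \<Rightarrow> real^'n^'n" where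
  "mat_pow A 0 = mat 1"
| "mat_pow A (Suc k) = A ** mat_pow A k"

definition mat_exp :: "real^'n^'n \<Rightarrow> real \<Rightarrow> real^'n^'n" where
  "mat_exp A t = (\<Sum>k. (t ^ k / fact k) *\<^sub>R mat_pow A k)"

definition mat_infnorm :: "real^'n^'n \<Rightarrow> real" where
  "mat_infnorm A = Sup {infnorm (A *v x) | x. infnorm x \<le> 1}"

definition ones :: "real^'n" where "ones = (\<chi> i. 1)"

definition box_set :: "real^'n \<Rightarrow> (real^'n) set" where
  "box_set \<delta> = {x. \<forall>i. \<bar>x $ i\<bar> \<le> \<delta> $ i}"

definition CH :: "(real^'n) set \<Rightarrow> (real^'n) set \<Rightarrow> (real^'n) set" where
  "CH X Y = {l *\<^sub>R x + (1 - l) *\<^sub>R y | l x y. x \<in> X \<and> y \<in> Y \<and> 0 \<le> l \<and> l \<le> 1}"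

definition is_solution ::
  "real^'n^'n \<Rightarrow> real^'n \<Rightarrow> (real^'n) set \<Rightarrow> (real^'n) set \<Rightarrow> real
     \<Rightarrow> (real \<Rightarrow> real^'n) \<Rightarrow> (real \<Rightarrow> real^'n) \<Rightarrow> bool" where
  "is_solution A b U X0 t x u \<longleftrightarrow>
     u measurable_on {0..t} \<and> (\<forall>s\<in>{0..t}. u s \<in> U) \<and> x 0 \<in> X0 \<and>
     (\<forall>s\<in>{0..t}. ((\<lambda>r. A *v x r + b + u r) has_integral (x s - x 0)) {0..s})"

definition reach :: "real^'n^'n \<Rightarrow> real^'n \<Rightarrow> (real^'n) set \<Rightarrow> (real^'n) set \<Rightarrow> real
     \<Rightarrow> (real^'n) set" where
  "reach A b U X0 t = {x t | x u. is_solution A b U X0 t x u}"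

definition reach_interval :: "real^'n^'n \<Rightarrow> real^'n \<Rightarrow> (real^'n) set \<Rightarrow> (real^'n) set \<Rightarrow> real
     \<Rightarrow> (real^'n) set" where
  "reach_interval A b U X0 \<tau> = (\<Union>t\<in>{0..\<tau>}. reach A b U X0 t)"

end

theory Submission
  imports Defs
begin

text \<open>Write a solution as x(t) = e^(At) x(0) + G(A,t) b + int_0^t u + e(t). The input integral
  equals t v for some v in U, because the mean of a U-valued input lies in the closed convex set U;
  and e(s) = int_0^s A (e + int u), so Gronwall's inequality bounds |e(t)| by
  (max |U| / |A|) (e^(t|A|) - 1 - t|A|). At an intermediate time t = theta tau, the power series of
  e^(At) x(0) and G(A,t) b differ from their theta-interpolations between the times 0 and tau only in
  the terms of order at least 2, which are bounded by theta times alpha and gamma. Together with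
  convexity of s |-> e^s - 1 - s this puts x(t) on a segment from x(0) to a point of
  Y(tau) + B(alpha + gamma).\<close>

section \<open>Exponential series\<close>

definition exp_bounded :: "(nat \<Rightarrow> 'a::real_normed_vector) \<Rightarrow> bool" where
  "exp_bounded a \<longleftrightarrow> (\<exists>C R. \<forall>k. norm (a k) \<le> C * R ^ k)"

definition exp_series :: "(nat \<Rightarrow> 'a::real_normed_vector) \<Rightarrow> real \<Rightarrow> 'a" where
  "exp_series a s = (\<Sum>k. (s ^ k / fact k) *\<^sub>R a k)"

lemma exp_boundedE:
  assumes "exp_bounded a"
  obtains C R where "\<And>k. norm (a k) \<le> C * R ^ k" "R \<ge> 1"
proof -
  obtain C R where CR: "\<And>k. norm (a k) \<le> C * R ^ k"
    using assms unfolding exp_bounded_def by blast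
  have "norm (a k) \<le> \<bar>C\<bar> * max 1 \<bar>R\<bar> ^ k" for k
  proof -
    have "norm (a k) \<le> \<bar>C * R ^ k\<bar>" using CR[of k] by linarith
    also have "\<dots> \<le> \<bar>C\<bar> * max 1 \<bar>R\<bar> ^ k"
      by (auto simp: abs_mult power_abs intro!: mult_left_mono power_mono)
    finally show ?thesis .
  qed
  then show thesis by (rule that) auto
qed

lemma exp_boundedI: "(\<And>k. norm (a k) \<le> C * R ^ k) \<Longrightarrow> exp_bounded a"
  unfolding exp_bounded_def by blast

lemma exp_bounded_bounded_linear:
  assumes "bounded_linear f" "exp_bounded a"
  shows "exp_bounded (\<lambda>k. f (a k))"
proof -
  obtain K where K: "\<And>x. norm (f x) \<le> norm x * K" "K > 0"
    using bounded_linear.pos_bounded[OF assms(1)] by blast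
  obtain C R where CR: "\<And>k. norm (a k) \<le> C * R ^ k"
    using assms(2) unfolding exp_bounded_def by blast
  have "norm (f (a k)) \<le> (K * C) * R ^ k" for k
  proof -
    have "norm (f (a k)) \<le> norm (a k) * K" by (rule K(1))
    also have "\<dots> \<le> (C * R ^ k) * K" using CR[of k] K(2) by (simp add: mult_right_mono)
    finally show ?thesis by (simp add: mult_ac)
  qed
  then show ?thesis by (rule exp_boundedI)
qed

lemma exp_bounded_Suc:
  assumes "exp_bounded a"
  shows "exp_bounded (\<lambda>k. a (Suc k))"
proof -
  obtain C R where "\<And>k. norm (a k) \<le> C * R ^ k" "R \<ge> 1"
    using assms by (rule exp_boundedE) auto
  then have "norm (a (Suc k)) \<le> (C * R) * R ^ k" for k by (metis mult.assoc power_Suc)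
  then show ?thesis by (rule exp_boundedI)
qed

lemma exp_bounded_case_nat:
  assumes "exp_bounded a"
  shows "exp_bounded (\<lambda>k. case k of 0 \<Rightarrow> 0 | Suc j \<Rightarrow> a j)"
proof -
  obtain C R where CR: "\<And>k. norm (a k) \<le> C * R ^ k" and R: "R \<ge> 1"
    using assms by (rule exp_boundedE) auto
  have C: "C \<ge> 0" using order_trans[OF norm_ge_zero CR[of 0]] by simp
  have "norm (case k of 0 \<Rightarrow> 0 | Suc j \<Rightarrow> a j) \<le> C * R ^ k" for k
  proof (cases k)
    case (Suc j)
    have "norm (a j) \<le> C * R ^ j" by (rule CR)
    also have "\<dots> \<le> C * R ^ k"
      using Suc R C by (intro mult_left_mono power_increasing) auto
    finally show ?thesis using Suc by simp
  qed (use C R in simp)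
  then show ?thesis by (rule exp_boundedI)
qed

lemma summable_exp_series:
  fixes a :: "nat \<Rightarrow> 'a::banach"
  assumes "exp_bounded a"
  shows "summable (\<lambda>k. (s ^ k / fact k) *\<^sub>R a k)"
proof -
  obtain C R where CR: "\<And>k. norm (a k) \<le> C * R ^ k" and R: "R \<ge> 1"
    using assms by (rule exp_boundedE) auto
  show ?thesis
  proof (rule summable_comparison_test)
    show "summable (\<lambda>k. C * ((\<bar>s\<bar> * R) ^ k / fact k))"
      using summable_exp_generic[of "\<bar>s\<bar> * R"]
      by (intro summable_mult) (simp add: divide_inverse mult.commute)
    have "norm ((s ^ k / fact k) *\<^sub>R a k) \<le> C * ((\<bar>s\<bar> * R) ^ k / fact k)" for k
    proof -
      have "norm ((s ^ k / fact k) *\<^sub>R a k) = \<bar>s\<bar> ^ k / fact k * norm (a k)"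
        by (simp add: power_abs)
      also have "\<dots> \<le> \<bar>s\<bar> ^ k / fact k * (C * R ^ k)"
        using CR by (intro mult_left_mono) auto
      finally show ?thesis by (simp add: power_mult_distrib mult_ac)
    qed
    then show "\<exists>N. \<forall>k\<ge>N. norm ((s ^ k / fact k) *\<^sub>R a k) \<le> C * ((\<bar>s\<bar> * R) ^ k / fact k)"
      by blast
  qed
qed

lemma exp_series_sums:
  fixes a :: "nat \<Rightarrow> 'a::banach"
  shows "exp_bounded a \<Longrightarrow> (\<lambda>k. (s ^ k / fact k) *\<^sub>R a k) sums exp_series a s"
  unfolding exp_series_def by (rule summable_sums[OF summable_exp_series])

lemma exp_series_bounded_linear:
  fixes a :: "nat \<Rightarrow> 'a::banach"
  assumes "bounded_linear f" "exp_bounded a"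
  shows "f (exp_series a s) = exp_series (\<lambda>k. f (a k)) s"
proof -
  have "(\<lambda>k. f ((s ^ k / fact k) *\<^sub>R a k)) sums f (exp_series a s)"
    by (rule bounded_linear.sums[OF assms(1) exp_series_sums[OF assms(2)]])
  then show ?thesis
    unfolding exp_series_def
    by (simp add: sums_iff linear_scale[OF bounded_linear.linear[OF assms(1)]])
qed

lemma exp_series_zero: "exp_series a 0 = a 0"
proof -
  have "(\<lambda>k. ((0::real) ^ k / fact k) *\<^sub>R a k) = (\<lambda>k. if k = 0 then a 0 else 0)"
    by (auto simp: fun_eq_iff)
  then show ?thesis
    unfolding exp_series_def using sums_single[of 0 "\<lambda>_. a 0"] by (simp add: sums_iff)
qed

lemma exp_series_eq_if_Suc_eq:
  fixes a a' :: "nat \<Rightarrow> 'a::banach"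
  assumes "exp_bounded a" "exp_bounded a'" "\<And>k. a (Suc k) = a' (Suc k)"
  shows "exp_series a s - a 0 = exp_series a' s - a' 0"
proof -
  have "(\<lambda>k. (s ^ Suc k / fact (Suc k)) *\<^sub>R a (Suc k)) sums (exp_series a s - a 0)"
    using exp_series_sums[OF assms(1), of s] sums_Suc_iff[of "\<lambda>k. (s ^ k / fact k) *\<^sub>R a k"]
    by simp
  moreover have "(\<lambda>k. (s ^ Suc k / fact (Suc k)) *\<^sub>R a (Suc k)) sums (exp_series a' s - a' 0)"
    using exp_series_sums[OF assms(2), of s] sums_Suc_iff[of "\<lambda>k. (s ^ k / fact k) *\<^sub>R a' k"]
    by (simp add: assms(3))
  ultimately show ?thesis by (rule sums_unique2)
qed

lemma exp_series_real_has_field_derivative: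
  fixes a :: "nat \<Rightarrow> real"
  assumes "exp_bounded a"
  shows "(exp_series a has_field_derivative exp_series (\<lambda>k. a (Suc k)) s) (at s)"
proof -
  define c where "c k = a k / fact k" for k
  have series: "exp_series a' r = (\<Sum>k. c' k * r ^ k)" if "\<And>k. c' k = a' k / fact k"
    for a' c' and r :: real
    unfolding exp_series_def that by (simp add: field_simps)
  have "diffs c k = a (Suc k) / fact k" for k
    by (simp add: diffs_def c_def field_simps del: of_nat_Suc)
  then have "exp_series (\<lambda>k. a (Suc k)) s = (\<Sum>k. diffs c k * s ^ k)"
    by (intro series) simp
  moreover have "summable (\<lambda>k. c k * r ^ k)" for r
    using summable_exp_series[OF assms, of r] by (simp add: c_def field_simps)
  moreover have "exp_series a = (\<lambda>r. \<Sum>k. c k * r ^ k)"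
    by (intro ext series) (simp add: c_def)
  ultimately show ?thesis by (simp add: termdiffs_strong_converges_everywhere)
qed

lemma exp_series_has_vector_derivative:
  fixes a :: "nat \<Rightarrow> 'a::euclidean_space"
  assumes "exp_bounded a"
  shows "(exp_series a has_vector_derivative exp_series (\<lambda>k. a (Suc k)) s) (at s)"
  unfolding has_vector_derivative_def
proof (subst has_derivative_componentwise_within, intro ballI)
  fix i :: 'a assume "i \<in> Basis"
  have component: "exp_series a' r \<bullet> i = exp_series (\<lambda>k. a' k \<bullet> i) r" if "exp_bounded a'" for a' r
    using exp_series_bounded_linear[OF bounded_linear_inner_left that] .
  have "exp_bounded (\<lambda>k. a k \<bullet> i)"
    by (rule exp_bounded_bounded_linear[OF bounded_linear_inner_left assms])
  from exp_series_real_has_field_derivative[OF this, of s]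
  show "((\<lambda>r. exp_series a r \<bullet> i) has_derivative
        (\<lambda>h. (h *\<^sub>R exp_series (\<lambda>k. a (Suc k)) s) \<bullet> i)) (at s within UNIV)"
    by (simp add: component[OF assms] component[OF exp_bounded_Suc[OF assms]]
        has_field_derivative_def mult_commute_abs)
qed

definition exp_remainder :: "real \<Rightarrow> real" where
  "exp_remainder x = exp x - 1 - x"

lemma exp_remainder_nonneg: "0 \<le> exp_remainder x"
  using exp_ge_add_one_self[of x] by (simp add: exp_remainder_def algebra_simps)

lemma exp_remainder_sums: "(\<lambda>k. if k < 2 then 0 else x ^ k / fact k) sums exp_remainder x"
proof -
  have "(\<lambda>k. x ^ k / fact k - (if k = 0 then 1 else 0) - (if k = 1 then x else 0))
          sums (exp x - 1 - x)"
    using exp_converges[of x] by (intro sums_diff sums_single) (simp add: divide_inverse mult.commute)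
  moreover have "(\<lambda>k. x ^ k / fact k - (if k = 0 then 1 else 0) - (if k = 1 then x else 0)) =
                 (\<lambda>k. if k < 2 then 0 else x ^ k / fact k)"
    by (auto simp: fun_eq_iff less_2_cases_iff)
  ultimately show ?thesis by (simp add: exp_remainder_def)
qed

lemma exp_remainder_scale_le:
  assumes "0 \<le> \<theta>" "\<theta> \<le> 1"
  shows "exp_remainder (\<theta> * x) \<le> \<theta> * exp_remainder x"
proof -
  have "exp ((1 - \<theta>) *\<^sub>R 0 + \<theta> *\<^sub>R x) \<le> (1 - \<theta>) * exp 0 + \<theta> * exp x"
    using assms by (intro convex_onD[OF exp_convex]) auto
  then show ?thesis by (simp add: exp_remainder_def algebra_simps)
qed

lemma infnorm_suminf_le:
  fixes f :: "nat \<Rightarrow> 'a::euclidean_space"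
  assumes "f sums S" "summable g" "\<And>k. infnorm (f k) \<le> g k"
  shows "infnorm S \<le> suminf g"
proof (rule LIMSEQ_le_const2)
  show "(\<lambda>n. infnorm (\<Sum>k<n. f k)) \<longlonglongrightarrow> infnorm S"
    using assms(1) unfolding sums_def by (rule tendsto_infnorm)
  have "infnorm (\<Sum>k<n. f k) \<le> suminf g" for n
  proof -
    have "infnorm (\<Sum>k<n. f k) \<le> (\<Sum>k<n. infnorm (f k))"
      by (induction n) (auto simp: infnorm_0 intro: order_trans[OF infnorm_triangle])
    also have "\<dots> \<le> (\<Sum>k<n. g k)" by (intro sum_mono assms(3))
    also have "\<dots> \<le> suminf g"
      using assms(3) infnorm_pos_le order_trans by (blast intro: sum_le_suminf[OF assms(2)])
    finally show ?thesis .
  qed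
  then show "\<exists>N. \<forall>n\<ge>N. infnorm (\<Sum>k<n. f k) \<le> suminf g" by blast
qed

lemma exp_series_interpolation:
  fixes P :: "nat \<Rightarrow> 'a::euclidean_space"
  assumes P: "exp_bounded P" and \<theta>: "0 \<le> \<theta>" "\<theta> \<le> 1" and \<tau>: "\<tau> \<ge> 0"
    and L: "L \<ge> 0" and K: "K \<ge> 0" and PK: "\<And>k. k \<ge> 2 \<Longrightarrow> infnorm (P k) \<le> K * L ^ k"
  shows "infnorm (exp_series P (\<theta> * \<tau>) - \<theta> *\<^sub>R exp_series P \<tau> - (1 - \<theta>) *\<^sub>R P 0)
           \<le> \<theta> * K * exp_remainder (\<tau> * L)"
proof -
  define f where "f k = ((\<theta> * \<tau>) ^ k / fact k) *\<^sub>R P k - \<theta> *\<^sub>R ((\<tau> ^ k / fact k) *\<^sub>R P k)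
      - (if k = 0 then (1 - \<theta>) *\<^sub>R P 0 else 0)" for k
  have f_sums: "f sums (exp_series P (\<theta> * \<tau>) - \<theta> *\<^sub>R exp_series P \<tau> - (1 - \<theta>) *\<^sub>R P 0)"
    unfolding f_def by (intro sums_diff sums_scaleR_right exp_series_sums[OF P] sums_single)
  define g where "g k = \<theta> * K * (if k < 2 then 0 else (\<tau> * L) ^ k / fact k)" for k
  have g_sums: "g sums (\<theta> * K * exp_remainder (\<tau> * L))"
    unfolding g_def by (intro sums_mult exp_remainder_sums)
  have "infnorm (f k) \<le> g k" for k
  proof (cases "k < 2")
    case True
    then have "f k = 0" by (auto simp: f_def less_2_cases_iff algebra_simps)
    then show ?thesis using True by (simp add: g_def infnorm_0)
  next
    case False
    have coeff: "\<bar>(\<theta> * \<tau>) ^ k - \<theta> * \<tau> ^ k\<bar> \<le> \<theta> * \<tau> ^ k"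
    proof -
      have "\<theta> ^ k \<le> \<theta>" using \<theta> False by (intro power_le_one_iff[THEN iffD2] power_decreasing[of 1, simplified]) auto
      then have "\<theta> ^ k * \<tau> ^ k \<le> \<theta> * \<tau> ^ k" using \<tau> by (intro mult_right_mono) auto
      then show ?thesis using \<theta> \<tau> by (simp add: power_mult_distrib abs_le_iff)
    qed
    have "infnorm (f k) = \<bar>(\<theta> * \<tau>) ^ k - \<theta> * \<tau> ^ k\<bar> / fact k * infnorm (P k)"
      using False by (simp add: f_def infnorm_mul algebra_simps diff_divide_distrib[symmetric]
          scaleR_diff_left[symmetric])
    also have "\<dots> \<le> \<theta> * \<tau> ^ k / fact k * (K * L ^ k)"
      using coeff PK False \<theta> \<tau> by (intro mult_mono divide_right_mono) (auto simp: infnorm_pos_le)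
    also have "\<dots> = g k" using False by (simp add: g_def power_mult_distrib)
    finally show ?thesis .
  qed
  then show ?thesis
    using infnorm_suminf_le[OF f_sums sums_summable[OF g_sums]] sums_unique[OF g_sums] by simp
qed

section \<open>The induced infinity norm and the matrix exponential\<close>

lemma mat_infnorm_bdd_above:
  fixes A :: "real^'n^'n"
  shows "bdd_above {infnorm (A *v x) | x. infnorm x \<le> 1}"
proof -
  obtain K where K: "K > 0" "\<And>x. norm (A *v x) \<le> norm x * K"
    using bounded_linear.pos_bounded[OF matrix_vector_mul_bounded_linear[of A]] by blast
  have "infnorm (A *v x) \<le> sqrt (real DIM(real^'n)) * K" if "infnorm x \<le> 1" for x :: "real^'n"
  proof -
    have "infnorm (A *v x) \<le> norm x * K" using infnorm_le_norm K(2) order_trans by blast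
    also have "\<dots> \<le> (sqrt (real DIM(real^'n)) * infnorm x) * K"
      using norm_le_infnorm[of x] K(1) by (intro mult_right_mono) auto
    also have "\<dots> \<le> sqrt (real DIM(real^'n)) * K"
      using that K(1) by (simp add: mult_left_le)
    finally show ?thesis .
  qed
  then show ?thesis unfolding bdd_above_def by blast
qed

lemma infnorm_mult_vec_le:
  fixes A :: "real^'n^'n"
  shows "infnorm (A *v v) \<le> mat_infnorm A * infnorm v"
proof (cases "v = 0")
  case False
  then have v: "infnorm v > 0" by (simp add: infnorm_pos_lt)
  define w where "w = (1 / infnorm v) *\<^sub>R v"
  have "infnorm w = 1" using v by (simp add: w_def infnorm_mul)
  then have "infnorm (A *v w) \<le> mat_infnorm A"
    unfolding mat_infnorm_def by (intro cSup_upper mat_infnorm_bdd_above) auto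
  moreover have "A *v w = (1 / infnorm v) *\<^sub>R (A *v v)"
    by (simp add: w_def matrix_scaleR_vector_ac scaleR_matrix_vector_assoc)
  ultimately show ?thesis using v by (simp add: infnorm_mul divide_le_eq mult.commute)
qed (simp add: infnorm_0)

lemma mat_infnorm_nonneg: "0 \<le> mat_infnorm (A :: real^'n^'n)"
proof -
  have "infnorm (A *v 0) \<le> mat_infnorm A"
    unfolding mat_infnorm_def
    by (intro cSup_upper mat_infnorm_bdd_above) (auto simp: infnorm_0 intro!: exI[of _ 0])
  then show ?thesis by (simp add: infnorm_0)
qed

lemma mat_infnorm_pos:
  fixes A :: "real^'n^'n"
  assumes "A \<noteq> 0"
  shows "mat_infnorm A > 0"
proof -
  obtain x where "A *v x \<noteq> 0"
    using assms matrix_eq[of A 0] by auto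
  then have "0 < infnorm (A *v x)" by (simp add: infnorm_pos_lt)
  also have "\<dots> \<le> mat_infnorm A * infnorm x" by (rule infnorm_mult_vec_le)
  finally show ?thesis using infnorm_pos_le[of x] by (simp add: zero_less_mult_iff)
qed

lemma infnorm_mat_pow_mult_vec_le:
  fixes A :: "real^'n^'n"
  shows "infnorm (mat_pow A k *v v) \<le> mat_infnorm A ^ k * infnorm v"
proof (induction k)
  case (Suc k)
  have "infnorm (mat_pow A (Suc k) *v v) = infnorm (A *v (mat_pow A k *v v))"
    by (simp add: matrix_vector_mul_assoc)
  also have "\<dots> \<le> mat_infnorm A * infnorm (mat_pow A k *v v)" by (rule infnorm_mult_vec_le)
  also have "\<dots> \<le> mat_infnorm A * (mat_infnorm A ^ k * infnorm v)"
    using Suc mat_infnorm_nonneg by (intro mult_left_mono) auto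
  finally show ?case by (simp add: mult.assoc)
qed simp

lemma norm_matrix_le_infnorm_mult_vec:
  fixes M :: "real^'n^'n"
  assumes "\<And>v. infnorm (M *v v) \<le> c * infnorm v" "c \<ge> 0"
  shows "norm M \<le> sqrt (real DIM(real^'n^'n)) * c"
proof -
  have "\<bar>M \<bullet> e\<bar> \<le> c" if "e \<in> Basis" for e
  proof -
    from that obtain i j where e: "e = axis i (axis j (1::real))" by (auto simp: Basis_vec_def)
    have "\<bar>M \<bullet> e\<bar> = \<bar>(M *v axis j 1) $ i\<bar>"
      by (simp add: e inner_axis matrix_vector_mult_basis column_def)
    also have "\<dots> \<le> c * infnorm (axis j (1::real))"
      using component_le_infnorm_cart assms(1) order_trans by blast
    also have "\<dots> \<le> c"
      using infnorm_le_norm[of "axis j (1::real)"] assms(2) by (simp add: mult_left_le norm_axis_1)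
    finally show ?thesis .
  qed
  then have "infnorm M \<le> c" by (simp add: infnorm_Max)
  then have "sqrt (real DIM(real^'n^'n)) * infnorm M \<le> sqrt (real DIM(real^'n^'n)) * c"
    by (intro mult_left_mono) auto
  then show ?thesis using norm_le_infnorm[of M] by linarith
qed

lemma exp_bounded_mat_pow: "exp_bounded (mat_pow (A :: real^'n^'n))"
  by (rule exp_boundedI[where R = "mat_infnorm A"], rule norm_matrix_le_infnorm_mult_vec)
     (simp_all add: infnorm_mat_pow_mult_vec_le mat_infnorm_nonneg)

lemma bounded_linear_mult_vec_left: "bounded_linear (\<lambda>M :: real^'n^'m. M *v v)"
  by (auto simp: linear_conv_bounded_linear[symmetric] linear_iff matrix_vector_mult_add_rdistrib
      scaleR_matrix_vector_assoc)

lemma exp_bounded_mat_pow_mult_vec: "exp_bounded (\<lambda>k. mat_pow (A :: real^'n^'n) k *v v)"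
  by (rule exp_bounded_bounded_linear[OF bounded_linear_mult_vec_left exp_bounded_mat_pow])

lemma mat_exp_eq_exp_series: "mat_exp A = exp_series (mat_pow A)"
  by (simp add: fun_eq_iff mat_exp_def exp_series_def)

lemma mat_exp_mult_vec: "mat_exp A s *v v = exp_series (\<lambda>k. mat_pow A k *v v) s"
  unfolding mat_exp_eq_exp_series
  by (rule exp_series_bounded_linear[OF bounded_linear_mult_vec_left exp_bounded_mat_pow])

lemma mat_exp_zero_mult_vec: "mat_exp A 0 *v v = v"
  by (simp add: mat_exp_mult_vec exp_series_zero)

lemma mat_exp_mult_vec_has_vector_derivative:
  "((\<lambda>s. mat_exp A s *v v) has_vector_derivative (A *v (mat_exp A s *v v))) (at s)"
proof -
  have "A *v (mat_exp A s *v v) = exp_series (\<lambda>k. A *v (mat_pow A k *v v)) s"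
    unfolding mat_exp_mult_vec
    by (rule exp_series_bounded_linear[OF matrix_vector_mul_bounded_linear exp_bounded_mat_pow_mult_vec])
  then show ?thesis
    using exp_series_has_vector_derivative[OF exp_bounded_mat_pow_mult_vec, of A v s]
    by (simp add: mat_exp_mult_vec matrix_vector_mul_assoc)
qed

lemma continuous_on_mat_exp: "continuous_on S (mat_exp (A :: real^'n^'n))"
  unfolding mat_exp_eq_exp_series
  by (meson continuous_at_imp_continuous_on has_vector_derivative_continuous
      exp_series_has_vector_derivative exp_bounded_mat_pow)

text \<open>G(A,s) b = int_0^s e^(Ar) b dr as the series sum_(k>=1) s^k/k! A^(k-1) b, which needs no
  inverse of A (see integral_mat_exp_mult_vec).\<close>

definition mat_exp_int :: "real^'n^'n \<Rightarrow> real^'n \<Rightarrow> real \<Rightarrow> real^'n" where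
  "mat_exp_int A b = exp_series (\<lambda>k. case k of 0 \<Rightarrow> 0 | Suc j \<Rightarrow> mat_pow A j *v b)"

lemma exp_bounded_mat_exp_int_coeffs:
  "exp_bounded (\<lambda>k. case k of 0 \<Rightarrow> 0 | Suc j \<Rightarrow> mat_pow (A :: real^'n^'n) j *v b)"
  by (rule exp_bounded_case_nat[OF exp_bounded_mat_pow_mult_vec])

lemma mat_exp_int_zero: "mat_exp_int A b 0 = 0"
  by (simp add: mat_exp_int_def exp_series_zero)

lemma mat_exp_int_has_vector_derivative:
  "(mat_exp_int A b has_vector_derivative (mat_exp A s *v b)) (at s)"
  using exp_series_has_vector_derivative[OF exp_bounded_mat_exp_int_coeffs, of A b s]
  by (simp add: mat_exp_int_def[abs_def] mat_exp_mult_vec)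

lemma mat_exp_int_eq: "A *v mat_exp_int A b s + b = mat_exp A s *v b"
proof -
  define a where "a k = (case k of 0 \<Rightarrow> 0 | Suc j \<Rightarrow> mat_pow A j *v b)" for k
  have a: "exp_bounded a"
    unfolding a_def by (rule exp_bounded_mat_exp_int_coeffs)
  have "A *v mat_exp_int A b s = exp_series (\<lambda>k. A *v a k) s"
    unfolding mat_exp_int_def a_def[symmetric]
    by (rule exp_series_bounded_linear[OF matrix_vector_mul_bounded_linear a])
  also have "\<dots> = exp_series (\<lambda>k. mat_pow A k *v b) s - b"
    using exp_series_eq_if_Suc_eq[OF exp_bounded_bounded_linear[OF matrix_vector_mul_bounded_linear[of A] a]
        exp_bounded_mat_pow_mult_vec[of A b], where s = s]
    by (simp add: a_def matrix_vector_mul_assoc)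
  finally show ?thesis by (simp add: mat_exp_mult_vec)
qed

lemma integral_mat_exp_mult_vec:
  assumes "\<tau> \<ge> 0"
  shows "integral {0..\<tau>} (\<lambda>t. mat_exp A (\<tau> - t)) *v b = mat_exp_int A b \<tau>"
proof -
  have "(\<lambda>t. mat_exp A (\<tau> - t)) integrable_on {0..\<tau>}"
    by (intro integrable_continuous_real continuous_on_compose2[OF continuous_on_mat_exp[of UNIV A]])
       (auto intro!: continuous_intros)
  then have "integral {0..\<tau>} (\<lambda>t. mat_exp A (\<tau> - t)) *v b
               = integral {0..\<tau>} (\<lambda>t. mat_exp A (\<tau> - t) *v b)"
    by (rule integral_linear[OF _ bounded_linear_mult_vec_left, unfolded o_def, symmetric])
  also have "\<dots> = mat_exp_int A b \<tau>"
  proof (rule integral_unique)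
    have "((\<lambda>t. - mat_exp_int A b (\<tau> - t)) has_vector_derivative (mat_exp A (\<tau> - t) *v b))
            (at t within {0..\<tau>})" for t
      by (rule has_vector_derivative_at_within)
         (auto intro!: derivative_eq_intros
           vector_diff_chain_at[OF _ mat_exp_int_has_vector_derivative, unfolded o_def])
    from fundamental_theorem_of_calculus[OF assms this]
    show "((\<lambda>t. mat_exp A (\<tau> - t) *v b) has_integral mat_exp_int A b \<tau>) {0..\<tau>}"
      by (simp add: mat_exp_int_zero)
  qed
  finally show ?thesis .
qed

lemma mat_exp_interpolation:
  assumes "0 \<le> \<theta>" "\<theta> \<le> 1" "\<tau> \<ge> 0"
  shows "infnorm (mat_exp A (\<theta> * \<tau>) *v v - \<theta> *\<^sub>R (mat_exp A \<tau> *v v) - (1 - \<theta>) *\<^sub>R v)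
           \<le> \<theta> * infnorm v * exp_remainder (\<tau> * mat_infnorm A)"
  using exp_series_interpolation[OF exp_bounded_mat_pow_mult_vec assms mat_infnorm_nonneg
      infnorm_pos_le infnorm_mat_pow_mult_vec_le[unfolded mult.commute[of "_ ^ _"]]]
  by (simp add: mat_exp_mult_vec)

lemma mat_exp_int_interpolation:
  assumes "0 \<le> \<theta>" "\<theta> \<le> 1" "\<tau> \<ge> 0" "mat_infnorm A > 0"
  shows "infnorm (mat_exp_int A b (\<theta> * \<tau>) - \<theta> *\<^sub>R mat_exp_int A b \<tau>)
           \<le> \<theta> * (infnorm b / mat_infnorm A) * exp_remainder (\<tau> * mat_infnorm A)"
proof -
  let ?L = "mat_infnorm A"
  have "infnorm (case k of 0 \<Rightarrow> 0 | Suc j \<Rightarrow> mat_pow A j *v b) \<le> infnorm b / ?L * ?L ^ k"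
    if k: "k \<ge> 2" for k
  proof -
    obtain j where j: "k = Suc j" using k by (cases k) auto
    have "infnorm (mat_pow A j *v b) \<le> ?L ^ j * infnorm b"
      by (rule infnorm_mat_pow_mult_vec_le)
    then show ?thesis using assms(4) by (simp add: j mult.commute)
  qed
  from exp_series_interpolation[OF exp_bounded_mat_exp_int_coeffs assms(1-3) less_imp_le[OF assms(4)]
      _ this]
  show ?thesis using assms(4) by (simp add: mat_exp_int_def infnorm_pos_le)
qed

section \<open>Gronwall's inequality and input averages\<close>

lemma continuous_le_integral_imp_nonpos:
  fixes g :: "real \<Rightarrow> real"
  assumes L: "L \<ge> 0" and t: "t \<ge> 0" and g: "continuous_on {0..t} g"
    and le: "\<And>s. s \<in> {0..t} \<Longrightarrow> g s \<le> L * integral {0..s} g"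
  shows "g t \<le> 0"
proof -
  define G where "G s = integral {0..s} g" for s
  define K where "K s = exp (- L * s) * G s" for s
  have "continuous_on {0..t} G"
    unfolding G_def[abs_def] by (intro indefinite_integral_continuous_1 integrable_continuous_real g)
  then have K: "continuous_on {0..t} K"
    unfolding K_def[abs_def] by (intro continuous_intros)
  have "K t \<le> K 0"
  proof (rule DERIV_nonpos_imp_decreasing_open[OF t _ K])
    fix s assume s: "0 < s" "s < t"
    have "(G has_real_derivative g s) (at s)"
      using integral_has_real_derivative[OF g, of s] s at_within_Icc_at[of 0 s t]
      unfolding G_def[abs_def] by auto
    then have "(K has_real_derivative exp (- L * s) * (g s - L * G s)) (at s)"
      unfolding K_def[abs_def] by (auto intro!: derivative_eq_intros simp: algebra_simps)
    moreover have "exp (- L * s) * (g s - L * G s) \<le> 0"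
      using le[of s] s by (simp add: G_def mult_nonneg_nonpos)
    ultimately show "\<exists>y. (K has_real_derivative y) (at s) \<and> y \<le> 0" by blast
  qed
  then have "G t \<le> 0" by (simp add: K_def G_def mult_le_0_iff)
  then have "L * G t \<le> 0" using L by (simp add: mult_nonneg_nonpos)
  then show ?thesis using le[of t] t by (simp add: G_def)
qed

lemma gronwall_linear_forcing:
  fixes \<phi> :: "real \<Rightarrow> real"
  assumes L: "L > 0" and t: "t \<ge> 0" and \<phi>: "continuous_on {0..t} \<phi>"
    and le: "\<And>s. s \<in> {0..t} \<Longrightarrow> \<phi> s \<le> integral {0..s} (\<lambda>r. L * (\<phi> r + M * r))"
  shows "\<phi> t \<le> M / L * exp_remainder (t * L)"
proof -
  define \<psi> where "\<psi> s = M / L * exp_remainder (s * L)" for s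
  have \<psi>: "((\<lambda>r. L * (\<psi> r + M * r)) has_integral \<psi> s) {0..s}" if "s \<ge> 0" for s
  proof -
    have "(\<psi> has_real_derivative L * (\<psi> r + M * r)) (at r within {0..s})" for r
      unfolding \<psi>_def[abs_def] exp_remainder_def using L
      by (auto intro!: derivative_eq_intros simp: field_simps)
    then show ?thesis
      using fundamental_theorem_of_calculus[OF that, of \<psi>]
      by (simp add: has_real_derivative_iff_has_vector_derivative \<psi>_def exp_remainder_def)
  qed
  have "\<phi> t - \<psi> t \<le> 0"
  proof (rule continuous_le_integral_imp_nonpos[OF less_imp_le[OF L] t])
    show "continuous_on {0..t} (\<lambda>s. \<phi> s - \<psi> s)"
      unfolding \<psi>_def exp_remainder_def using \<phi> by (intro continuous_intros)
    fix s assume s: "s \<in> {0..t}"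
    have "((\<lambda>r. L * (\<phi> r + M * r) - L * (\<psi> r + M * r)) has_integral
            (integral {0..s} (\<lambda>r. L * (\<phi> r + M * r)) - \<psi> s)) {0..s}"
      using s continuous_on_subset[OF \<phi>, of "{0..s}"]
      by (intro has_integral_diff \<psi> integrable_integral integrable_continuous_real)
         (auto intro!: continuous_intros)
    then have "((\<lambda>r. L * (\<phi> r - \<psi> r)) has_integral
            (integral {0..s} (\<lambda>r. L * (\<phi> r + M * r)) - \<psi> s)) {0..s}"
      by (simp add: algebra_simps)
    then have "integral {0..s} (\<lambda>r. L * (\<phi> r + M * r)) - \<psi> s = L * integral {0..s} (\<lambda>r. \<phi> r - \<psi> r)"
      by (metis integral_mult_right integral_unique)
    then show "\<phi> s - \<psi> s \<le> L * integral {0..s} (\<lambda>r. \<phi> r - \<psi> r)"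
      using le[OF s] by linarith
  qed
  then show ?thesis by (simp add: \<psi>_def)
qed

lemma integral_mean_mem_convex:
  fixes u :: "real \<Rightarrow> 'a::euclidean_space"
  assumes U: "convex U" "closed U" and t: "t > 0" and u: "u integrable_on {0..t}"
    and uU: "\<And>s. s \<in> {0..t} \<Longrightarrow> u s \<in> U"
  shows "(1 / t) *\<^sub>R integral {0..t} u \<in> U"
proof (rule ccontr)
  assume "(1 / t) *\<^sub>R integral {0..t} u \<notin> U"
  then obtain a c where ac: "a \<bullet> ((1 / t) *\<^sub>R integral {0..t} u) < c" "\<And>y. y \<in> U \<Longrightarrow> c < a \<bullet> y"
    using separating_hyperplane_closed_point[OF U] by blast
  have "integral {0..t} (\<lambda>s. c) \<le> integral {0..t} (\<lambda>s. u s \<bullet> a)"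
    using ac(2)[OF uU] integrable_linear[OF u bounded_linear_inner_left[of a]]
    by (intro integral_le) (auto simp: o_def inner_commute less_imp_le)
  also have "\<dots> = a \<bullet> integral {0..t} u"
    using integral_component_eq[OF u, of a] by (simp add: inner_commute)
  finally have "c * t \<le> a \<bullet> integral {0..t} u"
    using t by (simp add: mult.commute)
  then have "c \<le> a \<bullet> ((1 / t) *\<^sub>R integral {0..t} u)" using t by (simp add: field_simps)
  with ac(1) show False by simp
qed

lemma integral_eq_scaleR_mem_convex:
  fixes u :: "real \<Rightarrow> 'a::euclidean_space"
  assumes "convex U" "closed U" "t \<ge> 0" "u integrable_on {0..t}"
    and uU: "\<And>s. s \<in> {0..t} \<Longrightarrow> u s \<in> U"
  obtains v where "v \<in> U" "integral {0..t} u = t *\<^sub>R v"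
proof (cases "t = 0")
  case True
  then show thesis using that[of "u 0"] uU[of 0] by simp
next
  case False
  then show thesis
    using that[OF integral_mean_mem_convex[OF assms(1,2) _ assms(4) uU]] assms(3) by simp
qed

lemma infnorm_le:
  fixes x :: "'a::euclidean_space"
  shows "(\<And>i. i \<in> Basis \<Longrightarrow> \<bar>x \<bullet> i\<bar> \<le> c) \<Longrightarrow> infnorm x \<le> c"
  by (simp add: infnorm_Max)

lemma infnorm_integral_le:
  fixes g :: "real \<Rightarrow> 'a::euclidean_space"
  assumes "g integrable_on S" "k integrable_on S" "\<And>x. x \<in> S \<Longrightarrow> infnorm (g x) \<le> k x"
  shows "infnorm (integral S g) \<le> integral S k"
proof (rule infnorm_le)
  fix i :: 'a assume "i \<in> Basis"
  have "norm (integral S (\<lambda>x. g x \<bullet> i)) \<le> integral S k"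
    using integrable_linear[OF assms(1) bounded_linear_inner_left[of i], unfolded o_def] assms(2)
    by (rule integral_norm_bound_integral)
       (use assms(3) Basis_le_infnorm[OF \<open>i \<in> Basis\<close>] order_trans in \<open>fastforce simp: inner_commute\<close>)
  then show "\<bar>integral S g \<bullet> i\<bar> \<le> integral S k"
    by (simp add: integral_component_eq[OF assms(1)])
qed

section \<open>Solutions and reachable sets\<close>

lemma solution_input_integrable:
  fixes u :: "real \<Rightarrow> real^'n"
  assumes sol: "is_solution A b U X0 t x u" and M: "\<And>y. y \<in> U \<Longrightarrow> infnorm y \<le> M"
  shows "u integrable_on {0..t}"
proof (rule measurable_bounded_by_integrable_imp_integrable)
  show "u \<in> borel_measurable (lebesgue_on {0..t})"
    using sol unfolding is_solution_def by (auto intro: measurable_on_imp_borel_measurable_lebesgue)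
  show "(\<lambda>_. sqrt (real DIM(real^'n)) * M) integrable_on {0..t}" by (rule integrable_on_const) simp
  fix s assume "s \<in> {0..t}"
  then have "infnorm (u s) \<le> M" using sol M unfolding is_solution_def by blast
  then have "sqrt (real DIM(real^'n)) * infnorm (u s) \<le> sqrt (real DIM(real^'n)) * M"
    by (intro mult_left_mono) auto
  then show "norm (u s) \<le> sqrt (real DIM(real^'n)) * M"
    using norm_le_infnorm[of "u s"] by linarith
qed simp

lemma solution_continuous_on:
  assumes sol: "is_solution A b U X0 t x u" and t: "t \<ge> 0"
  shows "continuous_on {0..t} x"
proof -
  define f where "f r = A *v x r + b + u r" for r
  have f: "(f has_integral (x s - x 0)) {0..s}" if "s \<in> {0..t}" for s
    using sol that unfolding is_solution_def f_def by blast
  have "continuous_on {0..t} (\<lambda>s. x 0 + integral {0..s} f)"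
    using f[of t] t by (intro continuous_intros indefinite_integral_continuous_1) auto
  moreover have "x 0 + integral {0..s} f = x s" if "s \<in> {0..t}" for s
    using f[OF that] by (simp add: integral_unique)
  ultimately show ?thesis by (rule continuous_on_eq)
qed

lemma solution_deviation_eq:
  assumes sol: "is_solution A b U X0 t x u" and u: "u integrable_on {0..t}" and s: "s \<in> {0..t}"
    and h: "\<And>r. (h has_vector_derivative (A *v h r + b)) (at r)" and h0: "h 0 = x 0"
  shows "x s - h s - integral {0..s} u = integral {0..s} (\<lambda>r. A *v (x r - h r))"
proof -
  have "((\<lambda>r. A *v x r + b + u r) has_integral (x s - x 0)) {0..s}"
    using sol s unfolding is_solution_def by blast
  moreover have "((\<lambda>r. A *v h r + b) has_integral (h s - h 0)) {0..s}"
    using s by (intro fundamental_theorem_of_calculus) (auto intro: has_vector_derivative_at_within h)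
  moreover have "(u has_integral integral {0..s} u) {0..s}"
    using s by (intro integrable_integral integrable_on_subinterval[OF u]) auto
  ultimately have "((\<lambda>r. (A *v x r + b + u r) - (A *v h r + b) - u r) has_integral
                     (x s - x 0 - (h s - h 0) - integral {0..s} u)) {0..s}"
    by (intro has_integral_diff)
  then have "((\<lambda>r. A *v (x r - h r)) has_integral (x s - h s - integral {0..s} u)) {0..s}"
    by (simp add: h0 matrix_vector_right_distrib algebra_simps)
  then show ?thesis by (simp add: integral_unique)
qed

lemma solution_input_integral_bound:
  assumes sol: "is_solution A b U X0 t x u" and M: "\<And>y. y \<in> U \<Longrightarrow> infnorm y \<le> M"
    and r: "r \<in> {0..t}"
  shows "infnorm (integral {0..r} u) \<le> M * r"
proof -
  have "infnorm (integral {0..r} u) \<le> integral {0..r} (\<lambda>_. M)"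
    using sol M r unfolding is_solution_def
    by (intro infnorm_integral_le integrable_on_subinterval[OF solution_input_integrable[OF sol M]])
       auto
  then show ?thesis using r by (simp add: mult.commute)
qed

lemma solution_deviation_bound:
  assumes sol: "is_solution A b U X0 t x u" and t: "t \<ge> 0" and L: "mat_infnorm A > 0"
    and M: "\<And>y. y \<in> U \<Longrightarrow> infnorm y \<le> M"
    and h: "\<And>r. (h has_vector_derivative (A *v h r + b)) (at r)" and h0: "h 0 = x 0"
  shows "infnorm (x t - h t - integral {0..t} u) \<le> M / mat_infnorm A * exp_remainder (t * mat_infnorm A)"
proof -
  let ?L = "mat_infnorm A"
  define e where "e s = x s - h s - integral {0..s} u" for s
  have u: "u integrable_on {0..t}" by (rule solution_input_integrable[OF sol M])
  have h_cont: "continuous_on S h" for S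
    using h by (meson continuous_at_imp_continuous_on has_vector_derivative_continuous)
  have x_cont: "continuous_on {0..t} x" by (rule solution_continuous_on[OF sol t])
  have e_cont: "continuous_on {0..t} e"
    unfolding e_def[abs_def] using x_cont h_cont indefinite_integral_continuous_1[OF u]
    by (intro continuous_intros)
  then have \<phi>_cont: "continuous_on {0..t} (\<lambda>s. infnorm (e s))"
    by (intro continuous_intros)
  note int_u = solution_input_integral_bound[OF sol M]
  have "infnorm (e s) \<le> integral {0..s} (\<lambda>r. ?L * (infnorm (e r) + M * r))" if s: "s \<in> {0..t}" for s
  proof -
    have sub: "{0..s} \<subseteq> {0..t}" using s by auto
    have "infnorm (e s) = infnorm (integral {0..s} (\<lambda>r. A *v (x r - h r)))"
      by (simp add: e_def solution_deviation_eq[OF sol u s h h0])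
    also have "\<dots> \<le> integral {0..s} (\<lambda>r. ?L * (infnorm (e r) + M * r))"
    proof (rule infnorm_integral_le)
      show "(\<lambda>r. A *v (x r - h r)) integrable_on {0..s}"
        using continuous_on_subset[OF x_cont sub] h_cont
        by (intro integrable_continuous_real continuous_intros
            continuous_on_compose2[OF linear_continuous_on[OF matrix_vector_mul_bounded_linear[of A]]])
           auto
      show "(\<lambda>r. ?L * (infnorm (e r) + M * r)) integrable_on {0..s}"
        using continuous_on_subset[OF e_cont sub]
        by (intro integrable_continuous_real continuous_intros)
      fix r assume r: "r \<in> {0..s}"
      have "infnorm (A *v (x r - h r)) \<le> ?L * infnorm (e r + integral {0..r} u)"
        by (simp add: e_def infnorm_mult_vec_le)
      also have "\<dots> \<le> ?L * (infnorm (e r) + M * r)"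
        using infnorm_triangle[of "e r" "integral {0..r} u"] int_u[of r] r sub L
        by (intro mult_left_mono) auto
      finally show "infnorm (A *v (x r - h r)) \<le> ?L * (infnorm (e r) + M * r)" .
    qed
    finally show ?thesis .
  qed
  from gronwall_linear_forcing[OF L t \<phi>_cont this]
  show ?thesis by (simp add: e_def)
qed

lemma solution_decomposition:
  assumes sol: "is_solution A b U X0 t x u" and t: "t \<ge> 0" and L: "mat_infnorm A > 0"
    and U: "convex U" "closed U" and M: "\<And>y. y \<in> U \<Longrightarrow> infnorm y \<le> M"
  obtains v e where "v \<in> U" "x t = mat_exp A t *v x 0 + mat_exp_int A b t + t *\<^sub>R v + e"
    "infnorm e \<le> M / mat_infnorm A * exp_remainder (t * mat_infnorm A)"
proof -
  define h where "h s = mat_exp A s *v x 0 + mat_exp_int A b s" for s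
  have "(h has_vector_derivative (A *v h r + b)) (at r)" for r
  proof -
    have "(h has_vector_derivative (A *v (mat_exp A r *v x 0) + mat_exp A r *v b)) (at r)"
      unfolding h_def[abs_def]
      by (intro derivative_intros mat_exp_mult_vec_has_vector_derivative mat_exp_int_has_vector_derivative)
    moreover have "A *v (mat_exp A r *v x 0) + mat_exp A r *v b = A *v h r + b"
      unfolding h_def mat_exp_int_eq[of A b r, symmetric] by (simp add: matrix_vector_right_distrib)
    ultimately show ?thesis by simp
  qed
  from solution_deviation_bound[OF sol t L M this]
  have e: "infnorm (x t - h t - integral {0..t} u)
             \<le> M / mat_infnorm A * exp_remainder (t * mat_infnorm A)"
    by (simp add: h_def mat_exp_zero_mult_vec mat_exp_int_zero)
  have uU: "u s \<in> U" if "s \<in> {0..t}" for s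
    using sol that unfolding is_solution_def by blast
  obtain v where v: "v \<in> U" "integral {0..t} u = t *\<^sub>R v"
    by (rule integral_eq_scaleR_mem_convex[OF U t solution_input_integrable[OF sol M] uU])
  show thesis
    using e v by (intro that[of v "x t - h t - integral {0..t} u"]) (simp_all add: h_def)
qed

lemma infnorm_le_mult_imp_scaleR:
  fixes v :: "'a::euclidean_space"
  assumes v: "infnorm v \<le> \<theta> * B" and "0 \<le> \<theta>" "0 \<le> B"
  obtains w where "v = \<theta> *\<^sub>R w" "infnorm w \<le> B"
proof (cases "\<theta> = 0")
  case True
  then have "v = 0" using v infnorm_pos_le[of v] infnorm_eq_0[of v] by simp
  then show thesis using that[of 0] True assms(3) by (simp add: infnorm_0)
next
  case False
  then show thesis using that[of "(1 / \<theta>) *\<^sub>R v"] assms by (simp add: infnorm_mul field_simps)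
qed

lemma reach_mem_segment:
  assumes z: "z \<in> reach A b U X0 t" and t: "0 \<le> t" "t \<le> \<tau>" and L: "mat_infnorm A > 0"
    and U: "convex U" "closed U" and MU: "\<And>y. y \<in> U \<Longrightarrow> infnorm y \<le> MU"
    and MX: "\<And>y. y \<in> X0 \<Longrightarrow> infnorm y \<le> MX"
  obtains \<theta> x0 v w w' where "0 \<le> \<theta>" "\<theta> \<le> 1" "x0 \<in> X0" "v \<in> U"
    "infnorm w \<le> MU / mat_infnorm A * exp_remainder (\<tau> * mat_infnorm A)"
    "infnorm w' \<le> (MX + infnorm b / mat_infnorm A) * exp_remainder (\<tau> * mat_infnorm A)"
    "z = (1 - \<theta>) *\<^sub>R x0 + \<theta> *\<^sub>R (mat_exp A \<tau> *v x0 + mat_exp_int A b \<tau> + \<tau> *\<^sub>R v + w + w')"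
proof -
  let ?L = "mat_infnorm A"
  let ?c = "exp_remainder (\<tau> * ?L)"
  obtain x u where z: "z = x t" and sol: "is_solution A b U X0 t x u"
    using z unfolding reach_def by blast
  have x0: "x 0 \<in> X0" and "u 0 \<in> U" using sol t unfolding is_solution_def by auto
  then have MU0: "MU \<ge> 0" and MX0: "MX \<ge> 0"
    using MU MX infnorm_pos_le order_trans by blast+
  \<comment> \<open>for \<tau> = 0 division by zero gives \<theta> = 0, and still t = \<theta> * \<tau>\<close>
  define \<theta> where "\<theta> = t / \<tau>"
  have \<theta>: "0 \<le> \<theta>" "\<theta> \<le> 1" "t = \<theta> * \<tau>"
    by (cases "\<tau> = 0") (use t in \<open>auto simp: \<theta>_def divide_le_eq_1\<close>)
  obtain v e where v: "v \<in> U" and xt: "x t = mat_exp A t *v x 0 + mat_exp_int A b t + t *\<^sub>R v + e"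
    and e: "infnorm e \<le> MU / ?L * exp_remainder (t * ?L)"
    by (rule solution_decomposition[OF sol t(1) L U MU])
  have "MU / ?L * exp_remainder (t * ?L) \<le> MU / ?L * (\<theta> * ?c)"
    using exp_remainder_scale_le[OF \<theta>(1,2), of "\<tau> * ?L"] \<theta>(3) MU0 L
    by (intro mult_left_mono) (auto simp: mult.assoc)
  with e have "infnorm e \<le> \<theta> * (MU / ?L * ?c)" by (simp add: mult_ac)
  then obtain w where w: "e = \<theta> *\<^sub>R w" "infnorm w \<le> MU / ?L * ?c"
    by (rule infnorm_le_mult_imp_scaleR) (use \<theta> MU0 L exp_remainder_nonneg in auto)
  define D where "D = (mat_exp A t *v x 0 - \<theta> *\<^sub>R (mat_exp A \<tau> *v x 0) - (1 - \<theta>) *\<^sub>R x 0)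
                      + (mat_exp_int A b t - \<theta> *\<^sub>R mat_exp_int A b \<tau>)"
  have "infnorm D \<le> \<theta> * infnorm (x 0) * ?c + \<theta> * (infnorm b / ?L) * ?c"
    unfolding D_def \<theta>(3)
    using t \<theta>(3)
    by (intro order_trans[OF infnorm_triangle add_mono] mat_exp_interpolation
        mat_exp_int_interpolation \<theta>(1,2) L) auto
  also have "\<dots> \<le> \<theta> * MX * ?c + \<theta> * (infnorm b / ?L) * ?c"
    using MX[OF x0] \<theta>(1) exp_remainder_nonneg[of "\<tau> * ?L"]
    by (intro add_right_mono mult_right_mono mult_left_mono) auto
  also have "\<dots> = \<theta> * ((MX + infnorm b / ?L) * ?c)" by (simp add: algebra_simps)
  finally obtain w' where w': "D = \<theta> *\<^sub>R w'" "infnorm w' \<le> (MX + infnorm b / ?L) * ?c"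
    by (rule infnorm_le_mult_imp_scaleR)
       (use \<theta> MX0 L exp_remainder_nonneg infnorm_pos_le[of b] in \<open>auto intro!: mult_nonneg_nonneg\<close>)
  have "z = (1 - \<theta>) *\<^sub>R x 0 + \<theta> *\<^sub>R (mat_exp A \<tau> *v x 0 + mat_exp_int A b \<tau> + \<tau> *\<^sub>R v + w + w')"
    using w(1) w'(1)[unfolded D_def \<theta>(3)] xt[unfolded \<theta>(3)] unfolding z \<theta>(3)
    by (simp add: algebra_simps)
  then show thesis using that \<theta>(1,2) x0 v w(2) w'(2) by blast
qed

lemma infnorm_le_Sup_infnorm:
  fixes S :: "'a::euclidean_space set"
  assumes "compact S" "y \<in> S"
  shows "infnorm y \<le> Sup (infnorm ` S)"
proof (rule cSup_upper)
  obtain B where "\<And>z. z \<in> S \<Longrightarrow> norm z \<le> B"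
    using compact_imp_bounded[OF assms(1)] unfolding bounded_iff by blast
  then show "bdd_above (infnorm ` S)"
    unfolding bdd_above_def using infnorm_le_norm order_trans by blast
qed (use assms(2) in simp)

lemma infnorm_le_imp_mem_box_set: "infnorm v \<le> r \<Longrightarrow> v \<in> box_set (r *\<^sub>R ones)"
  unfolding box_set_def ones_def using component_le_infnorm_cart order_trans by fastforce

theorem proposition1:
  fixes A :: "real^'n^'n" and b :: "real^'n" and U X0 :: "(real^'n) set" and \<tau> :: real
  assumes "A \<noteq> 0" and "compact U" and "convex U" and "compact X0" and "convex X0"
    and "\<tau> \<ge> 0"
  defines "c \<equiv> exp (\<tau> * mat_infnorm A) - 1 - \<tau> * mat_infnorm A"
  defines "\<alpha> \<equiv> (c * Sup (infnorm ` X0)) *\<^sub>R ones"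
    and "\<beta> \<equiv> (c / mat_infnorm A * Sup (infnorm ` U)) *\<^sub>R ones"
    and "\<gamma> \<equiv> (c / mat_infnorm A * infnorm b) *\<^sub>R ones"
    and "G \<equiv> integral {0..\<tau>} (\<lambda>t. mat_exp A (\<tau> - t))"
  defines "Y \<equiv> {mat_exp A \<tau> *v x + G *v b + \<tau> *\<^sub>R u + w | x u w.
                  x \<in> X0 \<and> u \<in> U \<and> w \<in> box_set \<beta>}"
  shows "reach A b U X0 \<tau> \<subseteq> Y \<and>
     reach_interval A b U X0 \<tau> \<subseteq> CH X0 {y + w | y w. y \<in> Y \<and> w \<in> box_set (\<alpha> + \<gamma>)}"
proof -
  let ?L = "mat_infnorm A"
  let ?c = "exp_remainder (\<tau> * ?L)"
  have L: "?L > 0" by (rule mat_infnorm_pos[OF assms(1)])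
  have U: "convex U" "closed U" using assms(2,3) compact_imp_closed by auto
  note MU = infnorm_le_Sup_infnorm[OF assms(2)] and MX = infnorm_le_Sup_infnorm[OF assms(4)]
  have c: "c = ?c" by (simp add: c_def exp_remainder_def)
  have Gb: "G *v b = mat_exp_int A b \<tau>"
    unfolding G_def by (rule integral_mat_exp_mult_vec[OF assms(6)])
  have Y: "mat_exp A \<tau> *v x0 + mat_exp_int A b \<tau> + \<tau> *\<^sub>R v + w \<in> Y"
    if "x0 \<in> X0" "v \<in> U" "infnorm w \<le> Sup (infnorm ` U) / ?L * ?c" for x0 v w
  proof -
    have "w \<in> box_set \<beta>"
      unfolding \<beta>_def c using that(3) by (intro infnorm_le_imp_mem_box_set) (simp add: mult_ac)
    then show ?thesis unfolding Y_def Gb using that(1,2) by blast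
  qed
  have "reach A b U X0 \<tau> \<subseteq> Y"
  proof
    fix z assume "z \<in> reach A b U X0 \<tau>"
    then obtain x u where z: "z = x \<tau>" and sol: "is_solution A b U X0 \<tau> x u"
      unfolding reach_def by blast
    obtain v e where v: "v \<in> U" and x: "x \<tau> = mat_exp A \<tau> *v x 0 + mat_exp_int A b \<tau> + \<tau> *\<^sub>R v + e"
      and e: "infnorm e \<le> Sup (infnorm ` U) / ?L * ?c"
      by (rule solution_decomposition[OF sol assms(6) L U MU])
    have "x 0 \<in> X0" using sol unfolding is_solution_def by blast
    from Y[OF this v e] show "z \<in> Y" unfolding z x .
  qed
  moreover have "reach_interval A b U X0 \<tau> \<subseteq> CH X0 {y + w | y w. y \<in> Y \<and> w \<in> box_set (\<alpha> + \<gamma>)}"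
  proof
    fix z assume "z \<in> reach_interval A b U X0 \<tau>"
    then obtain t where t: "0 \<le> t" "t \<le> \<tau>" and z: "z \<in> reach A b U X0 t"
      unfolding reach_interval_def by auto
    obtain \<theta> x0 v w w' where \<theta>: "0 \<le> \<theta>" "\<theta> \<le> 1" and x0: "x0 \<in> X0" and v: "v \<in> U"
      and w: "infnorm w \<le> Sup (infnorm ` U) / ?L * ?c"
      and w': "infnorm w' \<le> (Sup (infnorm ` X0) + infnorm b / ?L) * ?c"
      and z_eq: "z = (1 - \<theta>) *\<^sub>R x0 + \<theta> *\<^sub>R (mat_exp A \<tau> *v x0 + mat_exp_int A b \<tau> + \<tau> *\<^sub>R v + w + w')"
      by (rule reach_mem_segment[OF z t L U MU MX])
    have "\<alpha> + \<gamma> = ((Sup (infnorm ` X0) + infnorm b / ?L) * ?c) *\<^sub>R ones"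
      by (simp add: \<alpha>_def \<gamma>_def c algebra_simps)
    then have "w' \<in> box_set (\<alpha> + \<gamma>)" using w' by (simp add: infnorm_le_imp_mem_box_set)
    then have "mat_exp A \<tau> *v x0 + mat_exp_int A b \<tau> + \<tau> *\<^sub>R v + w + w'
                 \<in> {y + w | y w. y \<in> Y \<and> w \<in> box_set (\<alpha> + \<gamma>)}"
      using Y[OF x0 v w] by blast
    then show "z \<in> CH X0 {y + w | y w. y \<in> Y \<and> w \<in> box_set (\<alpha> + \<gamma>)}"
      unfolding CH_def z_eq using x0 \<theta>
      by (intro CollectI exI[of _ "1 - \<theta>"] exI[of _ x0]
          exI[of _ "mat_exp A \<tau> *v x0 + mat_exp_int A b \<tau> + \<tau> *\<^sub>R v + w + w'"]) simp
  qed
  ultimately show ?thesis ..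
qed

end
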